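(* Let $e\ge 1$ and $0\le p\le e$ be integers. Let $L$ and $R$ be fixed disjoint sets, each of cardinality $e$. Consider matrices $G=(m_{ij})\in\mathbb{N}^{L\times R}$, viewed as bipartite multigraphs on the vertex set $L\sqcup R$ (with $m_{ij}$ edges between $i\in L$ and $j\in R$), satisfying: (i) $\sum_{i\in L,j\in R} m_{ij}=2p$; (ii) for every $i\in L$, $l_i=\sum_{j\in R} m_{ij}\le 2$; (iii) for every $j\in R$, $c_j=\sum_{i\in L} m_{ij}\le 2$; (iv) no connected component of $G$ is a chain (path) having one endpoint in $L$ and the other endpoint in $R$. (Since all vertex degrees are at most $2$, each connected component is either a cycle or a chain.) Let $\mathcal C(G)$ denote the number of connected components of $G$ that are cycles. Define \[ \mathcal N_{e,p}^{\,\rm I}=\sum_{G}\frac{(2p)!\times 2^{\,2e-2p+\mathcal C(G)}}{\prod_{i,j}(m_{ij})!\times\prod_{i}(2-l_i)!\times\prod_{j}(2-c_j)!}, \] the sum running over all $G$ satisfying (i)–(iv). For nonnegative integers $p,q,m$ with $m\le\min\{p,q\}$ define \[ \mathcal N^{\,\rm II}_{p,q,m}=\frac{p!\,q!\,(2m)!\,(p+q-m)!\,(2p-2m)!\,(2q-2m)!}{(2p)!\,(2q)!\,m!\,(p+q-2m)!\,(p-m)!\,(q-m)!}. \] Then \[ \mathcal N_{e,p}^{\,\rm I}=\frac{(2e)!^2}{(2e-2p)!^2}\;\mathcal N^{\,\rm II}_{e,e,p}. \]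
   Context: Both quantities arise from computing the transvectant $(Q^e,Q^e)_{2p}$ of a binary quadratic form $Q$ in two ways: via a Feynman-diagram (graph) expansion, giving $(Q^e,Q^e)_{2p}$ up to normalization as $\mathcal N^{\,\rm I}_{e,p}\,Q^{2e-2p}(-\Delta)^p$, and via Dixon's summation theorem for ${}_3\mathbb F_2$ hypergeometric series, giving $(Q^e,Q^e)_{2p}=\mathcal N^{\,\rm II}_{e,e,p}\,Q^{2e-2p}(-\Delta)^p$, where $\Delta$ is the discriminant of $Q$. Comparing the two yields the stated closed formula for the weighted graph enumeration. *)

theory Defs
  imports Complex_Main
begin

text \<open>Vertices of the bipartite multigraph: (False, i) is vertex i of L = {0..<e},
  (True, j) is vertex j of R = {0..<e}; the tag makes L and R disjoint.
  A matrix G = (m i j) is a function nat => nat => nat, relevant only on i<e, j<e.\<close>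

definition gverts :: "nat \<Rightarrow> (bool \<times> nat) set" where
  "gverts e = {(b, i). i < e}"

definition rowsum :: "nat \<Rightarrow> (nat \<Rightarrow> nat \<Rightarrow> nat) \<Rightarrow> nat \<Rightarrow> nat" where
  "rowsum e m i = (\<Sum>j<e. m i j)"

definition colsum :: "nat \<Rightarrow> (nat \<Rightarrow> nat \<Rightarrow> nat) \<Rightarrow> nat \<Rightarrow> nat" where
  "colsum e m j = (\<Sum>i<e. m i j)"

definition gdeg :: "nat \<Rightarrow> (nat \<Rightarrow> nat \<Rightarrow> nat) \<Rightarrow> bool \<times> nat \<Rightarrow> nat" where
  "gdeg e m v = (if fst v then colsum e m (snd v) else rowsum e m (snd v))"

definition gadj :: "nat \<Rightarrow> (nat \<Rightarrow> nat \<Rightarrow> nat) \<Rightarrow> ((bool \<times> nat) \<times> (bool \<times> nat)) set" where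
  "gadj e m = {((False, i), (True, j)) | i j. i < e \<and> j < e \<and> 0 < m i j}
            \<union> {((True, j), (False, i)) | i j. i < e \<and> j < e \<and> 0 < m i j}"

definition gcomp :: "nat \<Rightarrow> (nat \<Rightarrow> nat \<Rightarrow> nat) \<Rightarrow> bool \<times> nat \<Rightarrow> (bool \<times> nat) set" where
  "gcomp e m v = {u \<in> gverts e. (v, u) \<in> (gadj e m)\<^sup>*}"

definition gcomps :: "nat \<Rightarrow> (nat \<Rightarrow> nat \<Rightarrow> nat) \<Rightarrow> (bool \<times> nat) set set" where
  "gcomps e m = gcomp e m ` gverts e"

text \<open>Since all degrees are at most 2, a connected component is a cycle iff all its
  vertices have degree exactly 2 (this includes a double edge i--j, a 2-cycle);
  otherwise it is a chain (possibly a single isolated vertex), whose endpoints are its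
  vertices of degree at most 1.\<close>
definition is_cycle_comp :: "nat \<Rightarrow> (nat \<Rightarrow> nat \<Rightarrow> nat) \<Rightarrow> (bool \<times> nat) set \<Rightarrow> bool" where
  "is_cycle_comp e m K = (\<forall>v\<in>K. gdeg e m v = 2)"

definition is_LR_chain :: "nat \<Rightarrow> (nat \<Rightarrow> nat \<Rightarrow> nat) \<Rightarrow> (bool \<times> nat) set \<Rightarrow> bool" where
  "is_LR_chain e m K = (\<not> is_cycle_comp e m K \<and>
     (\<exists>i. (False, i) \<in> K \<and> gdeg e m (False, i) \<le> 1) \<and>
     (\<exists>j. (True, j) \<in> K \<and> gdeg e m (True, j) \<le> 1))"

definition ncycles :: "nat \<Rightarrow> (nat \<Rightarrow> nat \<Rightarrow> nat) \<Rightarrow> nat" where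
  "ncycles e m = card {K \<in> gcomps e m. is_cycle_comp e m K}"

definition admissible :: "nat \<Rightarrow> nat \<Rightarrow> (nat \<Rightarrow> nat \<Rightarrow> nat) set" where
  "admissible e p = {m.
     (\<forall>i j. (e \<le> i \<or> e \<le> j) \<longrightarrow> m i j = 0) \<and>
     (\<Sum>i<e. \<Sum>j<e. m i j) = 2 * p \<and>
     (\<forall>i<e. rowsum e m i \<le> 2) \<and>
     (\<forall>j<e. colsum e m j \<le> 2) \<and>
     (\<forall>K\<in>gcomps e m. \<not> is_LR_chain e m K)}"

definition NI :: "nat \<Rightarrow> nat \<Rightarrow> real" where
  "NI e p = (\<Sum>m\<in>admissible e p.
     (fact (2*p) * 2 ^ (2*e - 2*p + ncycles e m)) /
     ((\<Prod>i<e. \<Prod>j<e. fact (m i j)) *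
      (\<Prod>i<e. fact (2 - rowsum e m i)) *
      (\<Prod>j<e. fact (2 - colsum e m j))))"

definition NII :: "nat \<Rightarrow> nat \<Rightarrow> nat \<Rightarrow> real" where
  "NII p q m = (fact p * fact q * fact (2*m) * fact (p+q-m) * fact (2*p-2*m) * fact (2*q-2*m)) /
     (fact (2*p) * fact (2*q) * fact m * fact (p+q-2*m) * fact (p-m) * fact (q-m))"

end

theory Submission
  imports Defs
begin

(*
  The weight 2^C(G) counts the "full splits" (X, Y) of G: sets X of left and Y of right vertices
  such that every edge runs inside X \<times> Y or inside (L - X) \<times> (R - Y), and every left vertex
  outside X and every right vertex inside Y has degree 2.  Such a colouring is constant on
  components; on a chain it is forced by the endpoints (a left endpoint forces "inside", a right
  endpoint "outside", so a chain from L to R admits no split), on a cycle it is free.  Exchanging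
  the summations, a matrix with a given full split is the disjoint union of two blocks, each a
  table with row sums 2 and column sums at most 2, and the weighted count of such tables is a
  multinomial coefficient.  Summing over the sizes of X and Y leaves, with c = e - p, a
  convolution of the ratios (2(c+k))!/((c+k)! k!); since (2n)! = 4^n (1/2)_n n!, this is the
  Chu-Vandermonde identity for rising factorials.
*)

section \<open>Central factorial convolution\<close>

lemma fact_double_div_fact_shift:
  "fact (2 * (c + k)) / fact (c + k) =
    (4 ^ (c + k) * pochhammer (1/2) c * pochhammer (of_nat c + 1/2) k :: 'a::field_char_0)"
proof -
  have "fact (2 * n) / fact n = (4 ^ n * pochhammer (1/2) n :: 'a)" for n
    by (simp add: fact_double power_mult)
  then have "fact (2 * (c + k)) / fact (c + k) = (4 ^ (c + k) * pochhammer (1/2) (c + k) :: 'a)" .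
  also have "pochhammer (1/2) (c + k) = pochhammer (1/2) c * (pochhammer (of_nat c + 1/2) k :: 'a)"
    by (simp add: pochhammer_product' add.commute)
  finally show ?thesis
    by (simp only: mult.assoc)
qed

lemma fact_add_pochhammer:
  "fact (n + p) = (fact n * pochhammer (of_nat n + 1) p :: 'a::{semiring_char_0,comm_semiring_1})"
  by (simp add: pochhammer_fact pochhammer_product' add.commute)

lemma sum_central_factorial_convolution:
  "(\<Sum>k\<le>p. fact (2*(c+k)) / (fact (c+k) * fact k) * (fact (2*(c+p-k)) / (fact (c+p-k) * fact (p-k))))
     = (4 ^ p * fact (2*c) * fact (2*c+p) / (fact c ^ 2 * fact p) :: real)"
proof -
  define P :: real where "P = pochhammer (1/2) c"
  define x :: real where "x = real c + 1/2"
  have summand: "fact (2*(c+k)) / (fact (c+k) * fact k) * (fact (2*(c+p-k)) / (fact (c+p-k) * fact (p-k)))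
      = 4 ^ (2*c+p) * P^2 * (of_nat (p choose k) * pochhammer x k * pochhammer x (p-k)) / fact p"
    if "k \<le> p" for k
  proof -
    have "c + p - k = c + (p - k)" and "(4::real) ^ (c+k) * 4 ^ (c+(p-k)) = 4 ^ (2*c+p)"
      using that by (simp_all flip: power_add)
    then show ?thesis
      using fact_double_div_fact_shift[of c k, where 'a=real] fact_double_div_fact_shift[of c "p-k", where 'a=real] that
      by (simp add: P_def x_def binomial_fact power2_eq_square field_simps)
  qed
  have "(\<Sum>k\<le>p. fact (2*(c+k)) / (fact (c+k) * fact k) * (fact (2*(c+p-k)) / (fact (c+p-k) * fact (p-k))))
      = 4 ^ (2*c+p) * P^2 * pochhammer (x + x) p / fact p"
    unfolding pochhammer_binomial_sum sum_distrib_left sum_divide_distrib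
    by (rule sum.cong[OF refl]) (rule summand, simp)
  also have "pochhammer (x + x) p = fact (2*c+p) / fact (2*c)"
    using fact_add_pochhammer[of "2*c" p, where 'a=real] by (simp add: x_def)
  also have "P = fact (2*c) / (4 ^ c * fact c)"
    using fact_double_div_fact_shift[of c 0, where 'a=real] by (simp add: P_def field_simps)
  finally show ?thesis
    by (simp add: power_add power_mult power2_eq_square field_simps)
qed

section \<open>Tables with prescribed row sums and bounded column sums\<close>

definition compositions :: "'b set \<Rightarrow> nat \<Rightarrow> ('b \<Rightarrow> nat) set" where
  "compositions B w = {v. (\<forall>b. b \<notin> B \<longrightarrow> v b = 0) \<and> (\<Sum>b\<in>B. v b) = w}"

lemma finite_compositions:
  assumes "finite B"
  shows "finite (compositions B w)"
proof -
  have "compositions B w \<subseteq> {v. \<forall>b. (b \<in> B \<longrightarrow> v b \<in> {..w}) \<and> (b \<notin> B \<longrightarrow> v b = 0)}"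
    using assms by (auto simp: compositions_def intro: member_le_sum)
  then show ?thesis
    by (rule finite_subset) (intro finite_set_of_finite_funs assms finite_atMost)
qed

lemma sum_compositions_insert:
  assumes "finite B" "a \<notin> B"
  shows "(\<Sum>v\<in>compositions (insert a B) w. f v) = (\<Sum>k\<le>w. \<Sum>v\<in>compositions B (w-k). f (v(a:=k)))"
proof -
  have "(\<Sum>k\<le>w. \<Sum>v\<in>compositions B (w-k). f (v(a:=k)))
      = (\<Sum>(k,v)\<in>Sigma {..w} (\<lambda>k. compositions B (w-k)). f (v(a:=k)))"
    by (rule sum.Sigma) (auto intro: finite_compositions assms)
  also have "\<dots> = (\<Sum>v\<in>compositions (insert a B) w. f v)"
  proof (rule sum.reindex_bij_witness[where i="\<lambda>v. (v a, v(a:=0))" and j="\<lambda>(k,v). v(a:=k)"])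
    fix kv assume "kv \<in> Sigma {..w} (\<lambda>k. compositions B (w-k))"
    then obtain k v where kv: "kv = (k,v)" "k \<le> w" "v \<in> compositions B (w-k)" by auto
    have "v a = 0" using kv assms by (auto simp: compositions_def)
    then show "(\<lambda>v. (v a, v(a:=0))) ((\<lambda>(k,v). v(a:=k)) kv) = kv"
      using kv by auto
    have "(\<Sum>b\<in>B. (v(a:=k)) b) = (\<Sum>b\<in>B. v b)"
      using assms by (intro sum.cong) auto
    then show "(\<lambda>(k,v). v(a:=k)) kv \<in> compositions (insert a B) w"
      using kv assms by (auto simp: compositions_def)
    show "f ((\<lambda>(k,v). v(a:=k)) kv) = (\<lambda>(k,v). f (v(a:=k))) kv"
      using kv by simp
  next
    fix v assume v: "v \<in> compositions (insert a B) w"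
    then have v_split: "v a + (\<Sum>b\<in>B. v b) = w"
      using assms by (simp add: compositions_def)
    show "(\<lambda>(k, v). v(a := k)) (v a, v(a := 0)) = v" by simp
    have "(\<Sum>b\<in>B. (v(a:=0)) b) = (\<Sum>b\<in>B. v b)"
      using assms by (intro sum.cong) auto
    then show "(v a, v(a := 0)) \<in> Sigma {..w} (\<lambda>k. compositions B (w - k))"
      using v v_split by (auto simp: compositions_def)
  qed
  finally show ?thesis by simp
qed

lemma sum_compositions_prod_choose:
  fixes B :: "'b set"
  assumes "finite B"
  shows "(\<Sum>v\<in>compositions B w. \<Prod>b\<in>B. s b choose v b) = (\<Sum>b\<in>B. s b) choose w"
  using assms
proof (induction B arbitrary: w rule: finite_induct)
  case empty
  have "compositions ({} :: 'b set) w = (if w = 0 then {\<lambda>_. 0} else {})"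
    by (auto simp: compositions_def)
  then show ?case by simp
next
  case (insert a B)
  have factor: "(\<Prod>b\<in>insert a B. s b choose (v(a:=k)) b) = (s a choose k) * (\<Prod>b\<in>B. s b choose v b)"
    for v k
  proof -
    have "(\<Prod>b\<in>B. s b choose (v(a:=k)) b) = (\<Prod>b\<in>B. s b choose v b)"
      using insert.hyps by (intro prod.cong) auto
    then show ?thesis using insert.hyps by simp
  qed
  have "(\<Sum>v\<in>compositions (insert a B) w. \<Prod>b\<in>insert a B. s b choose v b)
      = (\<Sum>k\<le>w. (s a choose k) * (\<Sum>v\<in>compositions B (w-k). \<Prod>b\<in>B. s b choose v b))"
    by (simp only: sum_compositions_insert[OF insert.hyps] factor sum_distrib_left)
  also have "\<dots> = (\<Sum>k\<le>w. (s a choose k) * ((\<Sum>b\<in>B. s b) choose (w-k)))"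
    by (simp add: insert.IH)
  also have "\<dots> = (s a + (\<Sum>b\<in>B. s b)) choose w"
    by (rule vandermonde)
  finally show ?case using insert.hyps by simp
qed

definition tables :: "'a set \<Rightarrow> 'b set \<Rightarrow> ('a \<Rightarrow> nat) \<Rightarrow> ('b \<Rightarrow> nat) \<Rightarrow> ('a \<Rightarrow> 'b \<Rightarrow> nat) set" where
  "tables A B t s = {g. (\<forall>a b. a \<notin> A \<or> b \<notin> B \<longrightarrow> g a b = 0) \<and>
     (\<forall>a\<in>A. (\<Sum>b\<in>B. g a b) = t a) \<and> (\<forall>b\<in>B. (\<Sum>a\<in>A. g a b) \<le> s b)}"

lemma tables_support: "g \<in> tables A B t s \<Longrightarrow> \<forall>a b. a \<notin> A \<or> b \<notin> B \<longrightarrow> g a b = 0"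
  by (simp add: tables_def)

definition table_weight :: "'a set \<Rightarrow> 'b set \<Rightarrow> ('b \<Rightarrow> nat) \<Rightarrow> ('a \<Rightarrow> 'b \<Rightarrow> nat) \<Rightarrow> real" where
  "table_weight A B s g =
     1 / ((\<Prod>a\<in>A. \<Prod>b\<in>B. fact (g a b)) * (\<Prod>b\<in>B. fact (s b - (\<Sum>a\<in>A. g a b))))"

lemma finite_tables:
  assumes "finite A" "finite B"
  shows "finite (tables A B t s)"
proof -
  let ?rows = "\<Union>a\<in>A. compositions B (t a)"
  have "tables A B t s \<subseteq> {g. \<forall>a. (a \<in> A \<longrightarrow> g a \<in> ?rows) \<and> (a \<notin> A \<longrightarrow> g a = (\<lambda>_. 0))}"
    by (auto simp: tables_def compositions_def)
  then show ?thesis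
    by (rule finite_subset) (intro finite_set_of_finite_funs assms finite_UN_I finite_compositions)
qed

lemma tables_insert_iff:
  assumes "finite A" "a \<notin> A"
  shows "g \<in> tables (insert a A) B t s \<longleftrightarrow>
    g a \<in> compositions B (t a) \<and> (\<forall>b\<in>B. g a b \<le> s b) \<and>
    g(a:=(\<lambda>_. 0)) \<in> tables A B t (\<lambda>b. s b - g a b)"
proof -
  have col: "(\<Sum>a'\<in>A. (if a' = a then (\<lambda>_. 0) else g a') b) = (\<Sum>a'\<in>A. g a' b)" for b
    using assms by (auto intro: sum.cong)
  have row: "(\<Sum>b\<in>B. (if a' = a then (\<lambda>_. 0) else g a') b) = (\<Sum>b\<in>B. g a' b)" if "a' \<in> A" for a'
    using assms that by auto
  show ?thesis
    using assms unfolding tables_def compositions_def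
    by (auto simp: col row le_diff_conv2 add.commute) (metis insertCI)
qed

lemma sum_tables_insert:
  assumes "finite A" "finite B" "a \<notin> A"
  shows "(\<Sum>g\<in>tables (insert a A) B t s. f g) =
    (\<Sum>v\<in>{v \<in> compositions B (t a). \<forall>b\<in>B. v b \<le> s b}.
       \<Sum>g\<in>tables A B t (\<lambda>b. s b - v b). f (g(a:=v)))"
proof -
  let ?V = "{v \<in> compositions B (t a). \<forall>b\<in>B. v b \<le> s b}"
  have "(\<Sum>g\<in>tables (insert a A) B t s. f g) =
      (\<Sum>(v,g)\<in>Sigma ?V (\<lambda>v. tables A B t (\<lambda>b. s b - v b)). f (g(a:=v)))"
  proof (rule sum.reindex_bij_witness[where i="\<lambda>g. (g a, g(a:=(\<lambda>_. 0)))" and j="\<lambda>(v,g). g(a:=v)", symmetric])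
    fix vg assume "vg \<in> Sigma ?V (\<lambda>v. tables A B t (\<lambda>b. s b - v b))"
    then obtain v g where vg: "vg = (v,g)" "v \<in> ?V" "g \<in> tables A B t (\<lambda>b. s b - v b)"
      by auto
    have "g a = (\<lambda>_. 0)" using vg assms(3) by (auto simp: tables_def)
    then have "(g(a:=v))(a:=(\<lambda>_. 0)) = g" by auto
    then show "(\<lambda>g. (g a, g(a:=(\<lambda>_. 0)))) ((\<lambda>(v,g). g(a:=v)) vg) = vg"
      and "(\<lambda>(v,g). g(a:=v)) vg \<in> tables (insert a A) B t s"
      using vg by (simp_all add: tables_insert_iff[OF assms(1,3)])
    show "f ((\<lambda>(v,g). g(a:=v)) vg) = (\<lambda>(v,g). f (g(a:=v))) vg"
      using vg by simp
  next
    fix g assume "g \<in> tables (insert a A) B t s"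
    then show "(\<lambda>(v,g). g(a:=v)) ((\<lambda>g. (g a, g(a:=(\<lambda>_. 0)))) g) = g"
      and "(\<lambda>g. (g a, g(a:=(\<lambda>_. 0)))) g \<in> Sigma ?V (\<lambda>v. tables A B t (\<lambda>b. s b - v b))"
      by (simp_all add: tables_insert_iff[OF assms(1,3)])
  qed
  also have "\<dots> = (\<Sum>v\<in>?V. \<Sum>g\<in>tables A B t (\<lambda>b. s b - v b). f (g(a:=v)))"
    by (rule sum.Sigma[symmetric])
      (auto intro: finite_tables assms finite_subset[OF _ finite_compositions[OF assms(2)]])
  finally show ?thesis .
qed

lemma table_weight_insert:
  assumes "finite A" "a \<notin> A"
  shows "table_weight (insert a A) B s (g(a:=v)) =
    table_weight A B (\<lambda>b. s b - v b) g / (\<Prod>b\<in>B. fact (v b))"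
proof -
  have "(\<Prod>a'\<in>A. \<Prod>b\<in>B. fact ((g(a:=v)) a' b)) = (\<Prod>a'\<in>A. \<Prod>b\<in>B. fact (g a' b) :: real)"
    using assms by (auto intro: prod.cong)
  moreover have "(\<Sum>a'\<in>A. (g(a:=v)) a' b) = (\<Sum>a'\<in>A. g a' b)" for b
    using assms by (auto intro: sum.cong)
  ultimately show ?thesis
    using assms by (simp add: table_weight_def fun_upd_same diff_diff_left del: fun_upd_apply)
qed

lemma sum_bounded_compositions_inverse_facts:
  assumes "finite B"
  shows "(\<Sum>v\<in>{v \<in> compositions B w. \<forall>b\<in>B. v b \<le> s b}.
      1 / ((\<Prod>b\<in>B. fact (s b - v b)) * (\<Prod>b\<in>B. fact (v b)))) =
    real ((\<Sum>b\<in>B. s b) choose w) / (\<Prod>b\<in>B. fact (s b))"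
proof -
  let ?V = "{v \<in> compositions B w. \<forall>b\<in>B. v b \<le> s b}"
  have "1 / ((\<Prod>b\<in>B. fact (s b - v b)) * (\<Prod>b\<in>B. fact (v b))) =
      real (\<Prod>b\<in>B. s b choose v b) / (\<Prod>b\<in>B. fact (s b))" if "v \<in> ?V" for v
  proof -
    have "real (\<Prod>b\<in>B. s b choose v b) = (\<Prod>b\<in>B. fact (s b) / (fact (v b) * fact (s b - v b)))"
      unfolding of_nat_prod using that by (intro prod.cong) (simp_all add: binomial_fact)
    also have "\<dots> = (\<Prod>b\<in>B. fact (s b)) / ((\<Prod>b\<in>B. fact (s b - v b)) * (\<Prod>b\<in>B. fact (v b)))"
      by (simp add: prod_dividef prod.distrib mult.commute)
    moreover have "(\<Prod>b\<in>B. fact (s b) :: real) \<noteq> 0"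
      by (intro less_imp_neq[symmetric] prod_pos) simp
    ultimately show ?thesis by simp
  qed
  then have "(\<Sum>v\<in>?V. 1 / ((\<Prod>b\<in>B. fact (s b - v b)) * (\<Prod>b\<in>B. fact (v b)))) =
      real (\<Sum>v\<in>?V. \<Prod>b\<in>B. s b choose v b) / (\<Prod>b\<in>B. fact (s b))"
    by (simp add: sum_divide_distrib)
  also have "(\<Sum>v\<in>?V. \<Prod>b\<in>B. s b choose v b) = (\<Sum>v\<in>compositions B w. \<Prod>b\<in>B. s b choose v b)"
    by (rule sum.mono_neutral_left) (auto simp: finite_compositions assms not_le)
  finally show ?thesis
    by (simp add: sum_compositions_prod_choose assms)
qed

(* Induction on the rows: the row a is a composition v of t a below the capacities s, the other
   rows form a table with capacities s - v, and the sum over v is the multinomial Vandermonde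
   identity. *)
lemma sum_table_weight:
  assumes "finite A" "finite B" "(\<Sum>a\<in>A. t a) \<le> (\<Sum>b\<in>B. s b)"
  shows "(\<Sum>g\<in>tables A B t s. table_weight A B s g) =
    fact (\<Sum>b\<in>B. s b) /
      (fact ((\<Sum>b\<in>B. s b) - (\<Sum>a\<in>A. t a)) * (\<Prod>b\<in>B. fact (s b)) * (\<Prod>a\<in>A. fact (t a)))"
  using assms(1,3)
proof (induction A arbitrary: s rule: finite_induct)
  case empty
  have "tables {} B t s = {\<lambda>_ _. 0}" by (auto simp: tables_def)
  then show ?case by (simp add: table_weight_def)
next
  case (insert a A)
  define S where "S = (\<Sum>b\<in>B. s b)"
  define T where "T = (\<Sum>a\<in>A. t a)"
  define V where "V = {v \<in> compositions B (t a). \<forall>b\<in>B. v b \<le> s b}"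
  have "(\<Sum>g\<in>tables (insert a A) B t s. table_weight (insert a A) B s g) =
      (\<Sum>v\<in>V. \<Sum>g\<in>tables A B t (\<lambda>b. s b - v b). table_weight A B (\<lambda>b. s b - v b) g / (\<Prod>b\<in>B. fact (v b)))"
    by (simp add: sum_tables_insert table_weight_insert insert.hyps assms(2) V_def)
  also have "\<dots> = (\<Sum>v\<in>V. fact (S - t a) / (fact (S - (t a + T)) * (\<Prod>a\<in>A. fact (t a))) *
      (1 / ((\<Prod>b\<in>B. fact (s b - v b)) * (\<Prod>b\<in>B. fact (v b)))))"
  proof (rule sum.cong[OF refl])
    fix v assume "v \<in> V"
    then have "(\<Sum>b\<in>B. s b - v b) = S - t a"
      unfolding S_def by (simp add: V_def compositions_def sum_subtractf_nat)
    moreover have "T \<le> S - t a"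
      using insert.prems insert.hyps unfolding S_def T_def by simp
    ultimately show "(\<Sum>g\<in>tables A B t (\<lambda>b. s b - v b). table_weight A B (\<lambda>b. s b - v b) g / (\<Prod>b\<in>B. fact (v b))) =
      fact (S - t a) / (fact (S - (t a + T)) * (\<Prod>a\<in>A. fact (t a))) *
      (1 / ((\<Prod>b\<in>B. fact (s b - v b)) * (\<Prod>b\<in>B. fact (v b))))"
      using insert.IH[of "\<lambda>b. s b - v b"] by (simp add: T_def sum_divide_distrib[symmetric])
  qed
  also have "\<dots> = fact (S - t a) / (fact (S - (t a + T)) * (\<Prod>a\<in>A. fact (t a))) *
      (real (S choose t a) / (\<Prod>b\<in>B. fact (s b)))"
    unfolding sum_distrib_left[symmetric] V_def S_def
    by (simp only: sum_bounded_compositions_inverse_facts assms(2))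
  also have "\<dots> = fact S / (fact (S - (t a + T)) * (\<Prod>b\<in>B. fact (s b)) * (fact (t a) * (\<Prod>a\<in>A. fact (t a))))"
    using insert.prems insert.hyps unfolding S_def T_def by (simp add: binomial_fact)
  finally show ?case
    using insert.hyps by (simp add: S_def T_def)
qed

lemma sum_table_weight_twos:
  assumes "finite A" "finite B" "card A \<le> card B"
  shows "(\<Sum>g\<in>tables A B (\<lambda>_. 2) (\<lambda>_. 2). table_weight A B (\<lambda>_. 2) g) =
    fact (2 * card B) / (fact (2 * card B - 2 * card A) * 2 ^ card B * 2 ^ card A)"
  using sum_table_weight[of A B "\<lambda>_. 2" "\<lambda>_. 2"] assms by (simp add: mult.commute)

section \<open>Full splits of the multigraph\<close>

lemma finite_gverts: "finite (gverts e)"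
proof -
  have "gverts e \<subseteq> UNIV \<times> {..<e}" by (auto simp: gverts_def)
  then show ?thesis by (rule finite_subset) simp
qed

lemma gadj_sym: "(u, w) \<in> gadj e m \<Longrightarrow> (w, u) \<in> gadj e m"
  by (auto simp: gadj_def)

lemma gadj_rtrancl_sym: "(u, w) \<in> (gadj e m)\<^sup>* \<Longrightarrow> (w, u) \<in> (gadj e m)\<^sup>*"
  by (induction rule: rtrancl_induct) (auto intro: converse_rtrancl_into_rtrancl gadj_sym)

lemma gcomp_subset: "gcomp e m v \<subseteq> gverts e"
  by (auto simp: gcomp_def)

lemma gcomp_self: "v \<in> gverts e \<Longrightarrow> v \<in> gcomp e m v"
  by (simp add: gcomp_def)

lemma gcomp_eq:
  assumes "w \<in> gcomp e m v"
  shows "gcomp e m w = gcomp e m v"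
proof -
  have "(v, w) \<in> (gadj e m)\<^sup>*" using assms by (simp add: gcomp_def)
  moreover from this have "(w, v) \<in> (gadj e m)\<^sup>*" by (rule gadj_rtrancl_sym)
  ultimately show ?thesis unfolding gcomp_def by (auto intro: rtrancl_trans)
qed

lemma gcomp_adj: "(u, w) \<in> gadj e m \<Longrightarrow> gcomp e m u = gcomp e m w"
  by (rule gcomp_eq[symmetric]) (auto simp: gcomp_def gadj_def gverts_def)

lemma gcomp_has_endpoint:
  assumes "\<forall>i<e. rowsum e m i \<le> 2" "\<forall>j<e. colsum e m j \<le> 2"
    and "\<not> is_cycle_comp e m (gcomp e m v)"
  obtains w where "w \<in> gcomp e m v" "gdeg e m w \<le> 1"
proof -
  obtain w where w: "w \<in> gcomp e m v" "gdeg e m w \<noteq> 2"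
    using assms(3) by (auto simp: is_cycle_comp_def)
  then have "w \<in> gverts e" using gcomp_subset by blast
  then have "gdeg e m w \<le> 2" using assms(1,2) by (cases w) (auto simp: gdeg_def gverts_def)
  then show ?thesis using w that by simp
qed

definition side_colour :: "nat set \<Rightarrow> nat set \<Rightarrow> bool \<times> nat \<Rightarrow> bool" where
  "side_colour X Y v = (if fst v then snd v \<in> Y else snd v \<in> X)"

definition full_split :: "nat \<Rightarrow> (nat \<Rightarrow> nat \<Rightarrow> nat) \<Rightarrow> nat set \<Rightarrow> nat set \<Rightarrow> bool" where
  "full_split e m X Y \<longleftrightarrow> X \<subseteq> {..<e} \<and> Y \<subseteq> {..<e} \<and>
     (\<forall>i<e. \<forall>j<e. 0 < m i j \<longrightarrow> (i \<in> X \<longleftrightarrow> j \<in> Y)) \<and>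
     (\<forall>i<e. rowsum e m i < 2 \<longrightarrow> i \<in> X) \<and>
     (\<forall>j<e. colsum e m j < 2 \<longrightarrow> j \<notin> Y)"

lemma full_split_colour_gcomp:
  assumes "full_split e m X Y" "w \<in> gcomp e m v"
  shows "side_colour X Y w = side_colour X Y v"
proof -
  have "(v, w) \<in> (gadj e m)\<^sup>*" using assms(2) by (simp add: gcomp_def)
  then show ?thesis
  proof (induction rule: rtrancl_induct)
    case (step u u')
    then show ?case
      using assms(1) by (auto simp: full_split_def gadj_def side_colour_def)
  qed simp
qed

lemma full_split_colour_endpoint:
  assumes "full_split e m X Y" "v \<in> gverts e" "gdeg e m v \<le> 1"
  shows "side_colour X Y v \<longleftrightarrow> \<not> fst v"
  using assms by (cases v) (auto simp: full_split_def side_colour_def gdeg_def gverts_def)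

lemma LR_chain_no_full_split:
  assumes "K \<in> gcomps e m" "is_LR_chain e m K"
  shows "\<not> full_split e m X Y"
proof
  assume split: "full_split e m X Y"
  obtain v where v: "K = gcomp e m v" using assms(1) by (auto simp: gcomps_def)
  obtain i j where ij: "(False, i) \<in> K" "gdeg e m (False, i) \<le> 1" "(True, j) \<in> K" "gdeg e m (True, j) \<le> 1"
    using assms(2) by (auto simp: is_LR_chain_def)
  have "(False, i) \<in> gverts e" "(True, j) \<in> gverts e"
    using ij gcomp_subset v by blast+
  then have "side_colour X Y (False, i)" "\<not> side_colour X Y (True, j)"
    using full_split_colour_endpoint[OF split] ij by auto
  moreover have "side_colour X Y (False, i) = side_colour X Y (True, j)"
    using full_split_colour_gcomp[OF split, of _ v] ij v by simp
  ultimately show False by simp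
qed

definition cycle_comps :: "nat \<Rightarrow> (nat \<Rightarrow> nat \<Rightarrow> nat) \<Rightarrow> (bool \<times> nat) set set" where
  "cycle_comps e m = {K \<in> gcomps e m. is_cycle_comp e m K}"

definition has_L_endpoint :: "nat \<Rightarrow> (nat \<Rightarrow> nat \<Rightarrow> nat) \<Rightarrow> (bool \<times> nat) set \<Rightarrow> bool" where
  "has_L_endpoint e m K \<longleftrightarrow> (\<exists>i. (False, i) \<in> K \<and> gdeg e m (False, i) \<le> 1)"

lemma full_split_colour_chain:
  assumes "\<forall>i<e. rowsum e m i \<le> 2" "\<forall>j<e. colsum e m j \<le> 2"
    and split: "full_split e m X Y" and "v \<in> gverts e" "\<not> is_cycle_comp e m (gcomp e m v)"
  shows "side_colour X Y v \<longleftrightarrow> has_L_endpoint e m (gcomp e m v)"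
proof (cases "has_L_endpoint e m (gcomp e m v)")
  case True
  then obtain i where i: "(False, i) \<in> gcomp e m v" "gdeg e m (False, i) \<le> 1"
    by (auto simp: has_L_endpoint_def)
  then have "side_colour X Y (False, i)"
    using full_split_colour_endpoint[OF split] gcomp_subset by fastforce
  then show ?thesis using True full_split_colour_gcomp[OF split i(1)] by simp
next
  case False
  obtain w where w: "w \<in> gcomp e m v" "gdeg e m w \<le> 1"
    using gcomp_has_endpoint assms(1,2,5) by blast
  with False have "fst w" by (cases w; cases "fst w") (auto simp: has_L_endpoint_def)
  then have "\<not> side_colour X Y w"
    using full_split_colour_endpoint[OF split] w gcomp_subset by blast
  then show ?thesis using False full_split_colour_gcomp[OF split w(1)] by simp
qed

definition cycle_choice_colour ::
  "nat \<Rightarrow> (nat \<Rightarrow> nat \<Rightarrow> nat) \<Rightarrow> (bool \<times> nat) set set \<Rightarrow> bool \<times> nat \<Rightarrow> bool" where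
  "cycle_choice_colour e m Z v =
     (if gcomp e m v \<in> cycle_comps e m then gcomp e m v \<in> Z else has_L_endpoint e m (gcomp e m v))"

lemma cycle_choice_colour_cycle:
  assumes "K \<in> cycle_comps e m" "v \<in> K"
  shows "cycle_choice_colour e m Z v \<longleftrightarrow> K \<in> Z"
proof -
  obtain w where "K = gcomp e m w" using assms(1) by (auto simp: cycle_comps_def gcomps_def)
  then have "gcomp e m v = K" using assms(2) gcomp_eq by blast
  then show ?thesis using assms(1) by (simp add: cycle_choice_colour_def)
qed

definition cycle_choice_split :: "nat \<Rightarrow> (nat \<Rightarrow> nat \<Rightarrow> nat) \<Rightarrow> (bool \<times> nat) set set \<Rightarrow> nat set \<times> nat set" where
  "cycle_choice_split e m Z =
     ({i. i < e \<and> cycle_choice_colour e m Z (False, i)}, {j. j < e \<and> cycle_choice_colour e m Z (True, j)})"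

definition chosen_cycles :: "nat \<Rightarrow> (nat \<Rightarrow> nat \<Rightarrow> nat) \<Rightarrow> nat set \<times> nat set \<Rightarrow> (bool \<times> nat) set set" where
  "chosen_cycles e m XY = {K \<in> cycle_comps e m. \<exists>v\<in>K. side_colour (fst XY) (snd XY) v}"

lemma side_colour_cycle_choice_split:
  assumes "v \<in> gverts e"
  shows "side_colour (fst (cycle_choice_split e m Z)) (snd (cycle_choice_split e m Z)) v \<longleftrightarrow>
    cycle_choice_colour e m Z v"
  using assms by (cases v) (auto simp: side_colour_def cycle_choice_split_def gverts_def)

lemma full_split_cycle_choice_split:
  assumes no_LR: "\<forall>K\<in>gcomps e m. \<not> is_LR_chain e m K"
  shows "case_prod (full_split e m) (cycle_choice_split e m Z)"
proof -
  have edge: "cycle_choice_colour e m Z (False, i) = cycle_choice_colour e m Z (True, j)"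
    if "i < e" "j < e" "0 < m i j" for i j
  proof -
    have "((False, i), (True, j)) \<in> gadj e m" using that by (auto simp: gadj_def)
    then show ?thesis by (simp add: cycle_choice_colour_def gcomp_adj)
  qed
  have low_deg_not_cycle: "gcomp e m v \<notin> cycle_comps e m" if "v \<in> gverts e" "gdeg e m v \<le> 1" for v
    using that gcomp_self[OF that(1)] by (force simp: cycle_comps_def is_cycle_comp_def)
  have low_L: "cycle_choice_colour e m Z (False, i)" if "i < e" "rowsum e m i < 2" for i
  proof -
    have v: "(False, i) \<in> gverts e" "gdeg e m (False, i) \<le> 1"
      using that by (auto simp: gverts_def gdeg_def)
    then show ?thesis
      using low_deg_not_cycle gcomp_self[OF v(1)]
      by (auto simp: cycle_choice_colour_def has_L_endpoint_def)
  qed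
  have low_R: "\<not> cycle_choice_colour e m Z (True, j)" if "j < e" "colsum e m j < 2" for j
  proof
    assume chosen: "cycle_choice_colour e m Z (True, j)"
    have v: "(True, j) \<in> gverts e" "gdeg e m (True, j) \<le> 1"
      using that by (auto simp: gverts_def gdeg_def)
    then have "gcomp e m (True, j) \<notin> cycle_comps e m" by (rule low_deg_not_cycle)
    then have "is_LR_chain e m (gcomp e m (True, j))"
      using chosen v gcomp_self[OF v(1)]
      by (auto simp: cycle_choice_colour_def has_L_endpoint_def is_LR_chain_def cycle_comps_def gcomps_def)
    then show False using no_LR v(1) by (auto simp: gcomps_def)
  qed
  show ?thesis
    unfolding full_split_def cycle_choice_split_def using edge low_L low_R by auto
qed

lemma chosen_cycles_cycle_choice_split:
  assumes "Z \<subseteq> cycle_comps e m"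
  shows "chosen_cycles e m (cycle_choice_split e m Z) = Z"
proof -
  have "(\<exists>v\<in>K. side_colour (fst (cycle_choice_split e m Z)) (snd (cycle_choice_split e m Z)) v) \<longleftrightarrow> K \<in> Z"
    if K: "K \<in> cycle_comps e m" for K
  proof -
    obtain w where w: "w \<in> gverts e" "K = gcomp e m w"
      using K by (auto simp: cycle_comps_def gcomps_def)
    then have "K \<subseteq> gverts e" "w \<in> K" using gcomp_subset gcomp_self by blast+
    then show ?thesis
      using side_colour_cycle_choice_split cycle_choice_colour_cycle[OF K] by blast
  qed
  then show ?thesis
    using assms unfolding chosen_cycles_def by blast
qed

lemma cycle_choice_split_chosen_cycles:
  assumes deg: "\<forall>i<e. rowsum e m i \<le> 2" "\<forall>j<e. colsum e m j \<le> 2"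
    and split: "full_split e m X Y"
  shows "cycle_choice_split e m (chosen_cycles e m (X, Y)) = (X, Y)"
proof -
  have colour: "side_colour X Y v \<longleftrightarrow> cycle_choice_colour e m (chosen_cycles e m (X, Y)) v"
    if v: "v \<in> gverts e" for v
  proof (cases "gcomp e m v \<in> cycle_comps e m")
    case True
    have "(\<exists>u\<in>gcomp e m v. side_colour X Y u) \<longleftrightarrow> side_colour X Y v"
      using full_split_colour_gcomp[OF split] gcomp_self[OF v] by blast
    then show ?thesis using True by (simp add: cycle_choice_colour_def chosen_cycles_def)
  next
    case False
    then have "\<not> is_cycle_comp e m (gcomp e m v)"
      using v by (auto simp: cycle_comps_def gcomps_def)
    then show ?thesis
      using False full_split_colour_chain[OF deg split v] by (simp add: cycle_choice_colour_def)
  qed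
  have "i \<in> X \<longleftrightarrow> cycle_choice_colour e m (chosen_cycles e m (X, Y)) (False, i)"
    "i \<in> Y \<longleftrightarrow> cycle_choice_colour e m (chosen_cycles e m (X, Y)) (True, i)" if "i < e" for i
    using colour[of "(False, i)"] colour[of "(True, i)"] that
    by (simp_all add: side_colour_def gverts_def)
  moreover have "X \<subseteq> {..<e}" "Y \<subseteq> {..<e}"
    using split by (auto simp: full_split_def)
  ultimately show ?thesis
    unfolding cycle_choice_split_def by auto
qed

lemma card_full_splits:
  assumes deg: "\<forall>i<e. rowsum e m i \<le> 2" "\<forall>j<e. colsum e m j \<le> 2"
  shows "card {(X, Y). full_split e m X Y} =
    (if \<forall>K\<in>gcomps e m. \<not> is_LR_chain e m K then 2 ^ ncycles e m else 0)"
proof (cases "\<forall>K\<in>gcomps e m. \<not> is_LR_chain e m K")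
  case False
  then have "{(X, Y). full_split e m X Y} = {}" using LR_chain_no_full_split by blast
  then show ?thesis using False by simp
next
  case True
  have "bij_betw (chosen_cycles e m) {(X, Y). full_split e m X Y} (Pow (cycle_comps e m))"
  proof (rule bij_betw_byWitness[where f'="cycle_choice_split e m"])
    show "\<forall>XY\<in>{(X, Y). full_split e m X Y}. cycle_choice_split e m (chosen_cycles e m XY) = XY"
      using cycle_choice_split_chosen_cycles[OF deg] by auto
    show "\<forall>Z\<in>Pow (cycle_comps e m). chosen_cycles e m (cycle_choice_split e m Z) = Z"
      using chosen_cycles_cycle_choice_split by auto
    show "chosen_cycles e m ` {(X, Y). full_split e m X Y} \<subseteq> Pow (cycle_comps e m)"
      by (auto simp: chosen_cycles_def)
    show "cycle_choice_split e m ` Pow (cycle_comps e m) \<subseteq> {(X, Y). full_split e m X Y}"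
      using full_split_cycle_choice_split[OF True] by (auto simp: case_prod_unfold)
  qed
  then have "card {(X, Y). full_split e m X Y} = card (Pow (cycle_comps e m))"
    by (rule bij_betw_same_card)
  also have "\<dots> = 2 ^ ncycles e m"
    using finite_gverts by (simp add: card_Pow ncycles_def cycle_comps_def gcomps_def)
  finally show ?thesis using True by simp
qed

section \<open>Block decomposition of matrices with a full split\<close>

definition split_matrices :: "nat \<Rightarrow> nat set \<Rightarrow> nat set \<Rightarrow> (nat \<Rightarrow> nat \<Rightarrow> nat) set" where
  "split_matrices e X Y = {m. (\<forall>i j. e \<le> i \<or> e \<le> j \<longrightarrow> m i j = 0) \<and>
     (\<forall>i<e. rowsum e m i \<le> 2) \<and> (\<forall>j<e. colsum e m j \<le> 2) \<and> full_split e m X Y}"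

definition matrix_denom :: "nat \<Rightarrow> (nat \<Rightarrow> nat \<Rightarrow> nat) \<Rightarrow> real" where
  "matrix_denom e m = (\<Prod>i<e. \<Prod>j<e. fact (m i j)) *
     (\<Prod>i<e. fact (2 - rowsum e m i)) * (\<Prod>j<e. fact (2 - colsum e m j))"

(* The X \<times> Y block is stored transposed, so that its lines with exact sum 2 (the columns in Y)
   become the rows of a table. *)
definition matrix_blocks ::
  "nat \<Rightarrow> nat set \<Rightarrow> nat set \<Rightarrow> (nat \<Rightarrow> nat \<Rightarrow> nat) \<Rightarrow> (nat \<Rightarrow> nat \<Rightarrow> nat) \<times> (nat \<Rightarrow> nat \<Rightarrow> nat)" where
  "matrix_blocks e X Y m =
     ((\<lambda>j i. if i \<in> X \<and> j \<in> Y then m i j else 0),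
      (\<lambda>i j. if i \<in> {..<e} - X \<and> j \<in> {..<e} - Y then m i j else 0))"

definition join_blocks :: "('b \<Rightarrow> 'a \<Rightarrow> nat) \<Rightarrow> ('a \<Rightarrow> 'b \<Rightarrow> nat) \<Rightarrow> 'a \<Rightarrow> 'b \<Rightarrow> nat" where
  "join_blocks g1 g2 = (\<lambda>i j. g1 j i + g2 i j)"

context
  fixes e :: nat and X Y :: "nat set"
  assumes X: "X \<subseteq> {..<e}" and Y: "Y \<subseteq> {..<e}"
begin

abbreviation (input) "G1 \<equiv> tables Y X (\<lambda>_. 2) (\<lambda>_. 2)"
abbreviation (input) "G2 \<equiv> tables ({..<e} - X) ({..<e} - Y) (\<lambda>_. 2) (\<lambda>_. 2)"

lemma sums_join_blocks:
  assumes g1: "\<forall>j i. j \<notin> Y \<or> i \<notin> X \<longrightarrow> g1 j i = 0"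
    and g2: "\<forall>i j. i \<notin> {..<e} - X \<or> j \<notin> {..<e} - Y \<longrightarrow> g2 i j = 0"
  shows "i \<in> X \<Longrightarrow> rowsum e (join_blocks g1 g2) i = (\<Sum>j\<in>Y. g1 j i)"
    and "i \<notin> X \<Longrightarrow> rowsum e (join_blocks g1 g2) i = (\<Sum>j\<in>{..<e} - Y. g2 i j)"
    and "j \<in> Y \<Longrightarrow> colsum e (join_blocks g1 g2) j = (\<Sum>i\<in>X. g1 j i)"
    and "j \<notin> Y \<Longrightarrow> colsum e (join_blocks g1 g2) j = (\<Sum>i\<in>{..<e} - X. g2 i j)"
proof -
  have "(\<Sum>j<e. g1 j i) = (\<Sum>j\<in>Y. g1 j i)" "(\<Sum>j<e. g2 i j) = (\<Sum>j\<in>{..<e} - Y. g2 i j)"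
    using Y g1 g2 by (auto intro: sum.mono_neutral_right)
  then show "i \<in> X \<Longrightarrow> rowsum e (join_blocks g1 g2) i = (\<Sum>j\<in>Y. g1 j i)"
    and "i \<notin> X \<Longrightarrow> rowsum e (join_blocks g1 g2) i = (\<Sum>j\<in>{..<e} - Y. g2 i j)"
    using g1 g2 by (simp_all add: rowsum_def join_blocks_def sum.distrib)
  have "(\<Sum>i<e. g1 j i) = (\<Sum>i\<in>X. g1 j i)" "(\<Sum>i<e. g2 i j) = (\<Sum>i\<in>{..<e} - X. g2 i j)"
    using X g1 g2 by (auto intro: sum.mono_neutral_right)
  then show "j \<in> Y \<Longrightarrow> colsum e (join_blocks g1 g2) j = (\<Sum>i\<in>X. g1 j i)"
    and "j \<notin> Y \<Longrightarrow> colsum e (join_blocks g1 g2) j = (\<Sum>i\<in>{..<e} - X. g2 i j)"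
    using g1 g2 by (simp_all add: colsum_def join_blocks_def sum.distrib)
qed

lemma join_blocks_in_split_matrices:
  assumes g1: "g1 \<in> G1" and g2: "g2 \<in> G2"
  shows "join_blocks g1 g2 \<in> split_matrices e X Y"
proof -
  note supp = tables_support[OF g1] tables_support[OF g2]
  note sums = sums_join_blocks[OF supp]
  have "\<forall>i j. e \<le> i \<or> e \<le> j \<longrightarrow> join_blocks g1 g2 i j = 0"
  proof (intro allI impI)
    fix i j assume "e \<le> i \<or> e \<le> j"
    then have "i \<notin> X \<or> j \<notin> Y" "i \<notin> {..<e} - X \<or> j \<notin> {..<e} - Y"
      using X Y by auto
    then have "g1 j i = 0" "g2 i j = 0" using supp by blast+
    then show "join_blocks g1 g2 i j = 0" by (simp add: join_blocks_def)
  qed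
  moreover have "rowsum e (join_blocks g1 g2) i \<le> 2" "rowsum e (join_blocks g1 g2) i < 2 \<longrightarrow> i \<in> X"
    if "i < e" for i
    using that g1 g2 by (cases "i \<in> X"; simp add: sums tables_def)+
  moreover have "colsum e (join_blocks g1 g2) j \<le> 2" "colsum e (join_blocks g1 g2) j < 2 \<longrightarrow> j \<notin> Y"
    if "j < e" for j
    using that g1 g2 by (cases "j \<in> Y"; simp add: sums tables_def)+
  moreover have "\<forall>i<e. \<forall>j<e. 0 < join_blocks g1 g2 i j \<longrightarrow> (i \<in> X \<longleftrightarrow> j \<in> Y)"
  proof (intro allI impI)
    fix i j assume ij: "i < e" "j < e" and pos: "0 < join_blocks g1 g2 i j"
    have "g1 j i = 0 \<or> (i \<in> X \<and> j \<in> Y)"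
      using supp(1) by blast
    moreover have "g2 i j = 0 \<or> (i \<notin> X \<and> j \<notin> Y)"
      using supp(2) ij by blast
    ultimately show "i \<in> X \<longleftrightarrow> j \<in> Y" using pos by (auto simp: join_blocks_def)
  qed
  ultimately show ?thesis
    using X Y unfolding split_matrices_def full_split_def by blast
qed

lemma split_matrix_blocks:
  assumes m: "m \<in> split_matrices e X Y"
  shows "case_prod join_blocks (matrix_blocks e X Y m) = m" and "matrix_blocks e X Y m \<in> G1 \<times> G2"
proof -
  define g1 where "g1 = fst (matrix_blocks e X Y m)"
  define g2 where "g2 = snd (matrix_blocks e X Y m)"
  have blocks: "matrix_blocks e X Y m = (g1, g2)"
    by (simp add: g1_def g2_def)
  have zero: "m i j = 0" if "e \<le> i \<or> e \<le> j" for i j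
    using m that by (auto simp: split_matrices_def)
  have mixed: "m i j = 0" if "i < e" "j < e" "(i \<in> X) \<noteq> (j \<in> Y)" for i j
    using m that by (auto simp: split_matrices_def full_split_def)
  have m_eq: "m = join_blocks g1 g2"
  proof (intro ext)
    fix i j
    show "m i j = join_blocks g1 g2 i j"
      using zero[of i j] mixed[of i j] X Y
      by (cases "i < e \<and> j < e") (auto simp: join_blocks_def g1_def g2_def matrix_blocks_def)
  qed
  then show "case_prod join_blocks (matrix_blocks e X Y m) = m"
    unfolding blocks prod.case by (rule sym)
  have supp: "\<forall>j i. j \<notin> Y \<or> i \<notin> X \<longrightarrow> g1 j i = 0"
    "\<forall>i j. i \<notin> {..<e} - X \<or> j \<notin> {..<e} - Y \<longrightarrow> g2 i j = 0"
    by (auto simp: g1_def g2_def matrix_blocks_def)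
  note sums = sums_join_blocks[OF supp, folded m_eq]
  have row_bounds: "rowsum e m i \<le> 2" "rowsum e m i < 2 \<longrightarrow> i \<in> X" if "i < e" for i
    using m that by (auto simp: split_matrices_def full_split_def)
  have col_bounds: "colsum e m j \<le> 2" "colsum e m j < 2 \<longrightarrow> j \<notin> Y" if "j < e" for j
    using m that by (auto simp: split_matrices_def full_split_def)
  have "(\<Sum>j\<in>Y. g1 j i) \<le> 2" if "i \<in> X" for i
    using that X row_bounds(1)[of i] sums(1)[OF that] by auto
  moreover have "(\<Sum>j\<in>{..<e} - Y. g2 i j) = 2" if "i \<in> {..<e} - X" for i
  proof -
    have "i < e" "i \<notin> X" using that by auto
    then show ?thesis using row_bounds[of i] sums(2)[of i] by (metis le_antisym not_less)
  qed
  moreover have "(\<Sum>i\<in>X. g1 j i) = 2" if "j \<in> Y" for j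
  proof -
    have "j < e" using that Y by auto
    then show ?thesis using col_bounds[of j] sums(3)[OF that] that by (metis le_antisym not_less)
  qed
  moreover have "(\<Sum>i\<in>{..<e} - X. g2 i j) \<le> 2" if "j \<in> {..<e} - Y" for j
    using that col_bounds(1)[of j] sums(4)[of j] by auto
  ultimately show "matrix_blocks e X Y m \<in> G1 \<times> G2"
    using supp by (auto simp: tables_def blocks)
qed

lemma matrix_blocks_join_blocks:
  assumes "g1 \<in> G1" "g2 \<in> G2"
  shows "matrix_blocks e X Y (join_blocks g1 g2) = (g1, g2)"
proof -
  have "g1 j i = 0" if "j \<notin> Y \<or> i \<notin> X" for i j
    using assms(1) that by (auto simp: tables_def)
  moreover have "g2 i j = 0" if "i \<notin> {..<e} - X \<or> j \<notin> {..<e} - Y" for i j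
    using assms(2) that unfolding tables_def by blast
  ultimately show ?thesis
    by (fastforce simp: matrix_blocks_def join_blocks_def)
qed

lemma sum_split_matrices:
  "(\<Sum>m\<in>split_matrices e X Y. f m) = (\<Sum>(g1, g2)\<in>G1 \<times> G2. f (join_blocks g1 g2))"
proof -
  have "(\<Sum>m\<in>split_matrices e X Y. f m) = (\<Sum>gg\<in>G1 \<times> G2. f (case_prod join_blocks gg))"
  proof (rule sum.reindex_bij_witness[where i="matrix_blocks e X Y" and j="case_prod join_blocks", symmetric])
    fix gg assume "gg \<in> G1 \<times> G2"
    then show "matrix_blocks e X Y (case_prod join_blocks gg) = gg"
      and "case_prod join_blocks gg \<in> split_matrices e X Y"
      by (auto simp: matrix_blocks_join_blocks join_blocks_in_split_matrices)
  qed (auto simp: split_matrix_blocks)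
  then show ?thesis by (simp add: case_prod_unfold)
qed

lemma prod_fact_join_blocks:
  assumes g1: "g1 \<in> G1" and g2: "g2 \<in> G2"
  shows "(\<Prod>i<e. \<Prod>j<e. fact (join_blocks g1 g2 i j)) =
    (\<Prod>j\<in>Y. \<Prod>i\<in>X. fact (g1 j i)) * (\<Prod>i\<in>{..<e} - X. \<Prod>j\<in>{..<e} - Y. fact (g2 i j) :: real)"
proof -
  note supp = tables_support[OF g1] tables_support[OF g2]
  have "fact (join_blocks g1 g2 i j) = fact (g1 j i) * (fact (g2 i j) :: real)" for i j
  proof (cases "j \<in> Y \<and> i \<in> X")
    case True
    then have "g2 i j = 0" using supp(2) by blast
    then show ?thesis by (simp add: join_blocks_def)
  next
    case False
    then have "g1 j i = 0" using supp(1) by blast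
    then show ?thesis by (simp add: join_blocks_def)
  qed
  then have "(\<Prod>i<e. \<Prod>j<e. fact (join_blocks g1 g2 i j)) =
      (\<Prod>i<e. \<Prod>j<e. fact (g1 j i)) * (\<Prod>i<e. \<Prod>j<e. fact (g2 i j) :: real)"
    by (simp add: prod.distrib)
  also have "(\<Prod>i<e. \<Prod>j<e. fact (g1 j i) :: real) = (\<Prod>j<e. \<Prod>i<e. fact (g1 j i))"
    by (rule prod.swap)
  also have "\<dots> = (\<Prod>j<e. \<Prod>i\<in>X. fact (g1 j i))"
    using X supp by (intro prod.cong refl prod.mono_neutral_right) auto
  also have "\<dots> = (\<Prod>j\<in>Y. \<Prod>i\<in>X. fact (g1 j i))"
    using Y supp by (intro prod.mono_neutral_right) auto
  also have "(\<Prod>i<e. \<Prod>j<e. fact (g2 i j) :: real) = (\<Prod>i<e. \<Prod>j\<in>{..<e} - Y. fact (g2 i j))"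
    using supp by (intro prod.cong refl prod.mono_neutral_right) auto
  also have "\<dots> = (\<Prod>i\<in>{..<e} - X. \<Prod>j\<in>{..<e} - Y. fact (g2 i j))"
    using supp by (intro prod.mono_neutral_right) auto
  finally show ?thesis .
qed

lemma matrix_denom_join_blocks:
  assumes g1: "g1 \<in> G1" and g2: "g2 \<in> G2"
  shows "1 / matrix_denom e (join_blocks g1 g2) =
    table_weight Y X (\<lambda>_. 2) g1 * table_weight ({..<e} - X) ({..<e} - Y) (\<lambda>_. 2) g2"
proof -
  note sums = sums_join_blocks[OF tables_support[OF g1] tables_support[OF g2]]
  have "(\<Prod>i<e. fact (2 - rowsum e (join_blocks g1 g2) i) :: real) =
      (\<Prod>i\<in>X. fact (2 - rowsum e (join_blocks g1 g2) i))"
    using X g2 by (intro prod.mono_neutral_right) (auto simp: sums tables_def)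
  also have "\<dots> = (\<Prod>i\<in>X. fact (2 - (\<Sum>j\<in>Y. g1 j i)))"
    by (intro prod.cong refl) (simp add: sums)
  finally have rows: "(\<Prod>i<e. fact (2 - rowsum e (join_blocks g1 g2) i) :: real) =
      (\<Prod>i\<in>X. fact (2 - (\<Sum>j\<in>Y. g1 j i)))" .
  have "(\<Prod>j<e. fact (2 - colsum e (join_blocks g1 g2) j) :: real) =
      (\<Prod>j\<in>{..<e} - Y. fact (2 - colsum e (join_blocks g1 g2) j))"
    using g1 by (intro prod.mono_neutral_right) (auto simp: sums tables_def)
  also have "\<dots> = (\<Prod>j\<in>{..<e} - Y. fact (2 - (\<Sum>i\<in>{..<e} - X. g2 i j)))"
    by (intro prod.cong refl) (simp add: sums)
  finally have cols: "(\<Prod>j<e. fact (2 - colsum e (join_blocks g1 g2) j) :: real) =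
      (\<Prod>j\<in>{..<e} - Y. fact (2 - (\<Sum>i\<in>{..<e} - X. g2 i j)))" .
  show ?thesis
    by (simp add: matrix_denom_def table_weight_def prod_fact_join_blocks[OF g1 g2] rows cols)
qed

lemma sum_split_matrices_inverse_denom:
  "(\<Sum>m\<in>split_matrices e X Y. 1 / matrix_denom e m) =
    (\<Sum>g\<in>G1. table_weight Y X (\<lambda>_. 2) g) * (\<Sum>g\<in>G2. table_weight ({..<e} - X) ({..<e} - Y) (\<lambda>_. 2) g)"
proof -
  have "(\<Sum>m\<in>split_matrices e X Y. 1 / matrix_denom e m) =
      (\<Sum>(g1, g2)\<in>G1 \<times> G2. table_weight Y X (\<lambda>_. 2) g1 * table_weight ({..<e} - X) ({..<e} - Y) (\<lambda>_. 2) g2)"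
    unfolding sum_split_matrices by (intro sum.cong refl) (auto simp: matrix_denom_join_blocks)
  then show ?thesis
    by (simp add: sum_product sum.cartesian_product)
qed

lemma total_split_matrix:
  assumes "m \<in> split_matrices e X Y"
  shows "(\<Sum>i<e. \<Sum>j<e. m i j) = 2 * card Y + 2 * (e - card X)"
proof -
  obtain g1 g2 where g: "g1 \<in> G1" "g2 \<in> G2" and m: "m = join_blocks g1 g2"
    using split_matrix_blocks[OF assms] by (metis mem_Times_iff prod.collapse prod.case)
  note supp = tables_support[OF g(1)] tables_support[OF g(2)]
  note sums = sums_join_blocks[OF supp, folded m]
  have "(\<Sum>i<e. \<Sum>j<e. m i j) = (\<Sum>i\<in>X. rowsum e m i) + (\<Sum>i\<in>{..<e} - X. rowsum e m i)"
    using X by (simp add: rowsum_def sum.subset_diff[of X "{..<e}"] add.commute)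
  also have "(\<Sum>i\<in>X. rowsum e m i) = (\<Sum>j\<in>Y. \<Sum>i\<in>X. g1 j i)"
    by (simp add: sums sum.swap[of _ X Y])
  also have "\<dots> = 2 * card Y"
    using g(1) by (simp add: tables_def)
  also have "(\<Sum>i\<in>{..<e} - X. rowsum e m i) = 2 * card ({..<e} - X)"
    using g(2) by (simp add: sums tables_def)
  also have "card ({..<e} - X) = e - card X"
    using X by (simp add: card_Diff_subset finite_subset)
  finally show ?thesis .
qed

end

section \<open>Summation over full splits\<close>

lemma sum_Pow_card:
  assumes "finite A"
  shows "(\<Sum>X\<in>Pow A. f (card X)) = (\<Sum>k\<le>card A. of_nat (card A choose k) * f k)"
proof -
  have "(\<Sum>X\<in>Pow A. f (card X)) = (\<Sum>k\<le>card A. \<Sum>X\<in>{X \<in> Pow A. card X = k}. f (card X))"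
    using assms by (intro sum.group[symmetric]) (auto intro: card_mono)
  also have "\<dots> = (\<Sum>k\<le>card A. of_nat (card A choose k) * f k)"
  proof (rule sum.cong[OF refl])
    fix k
    have "card {X \<in> Pow A. card X = k} = card A choose k"
      using n_subsets[OF assms, of k] by (simp add: Collect_conj_eq Pow_def Int_commute)
    then show "(\<Sum>X\<in>{X \<in> Pow A. card X = k}. f (card X)) = of_nat (card A choose k) * f k"
      by simp
  qed
  finally show ?thesis .
qed

lemma sum_Pow_Pow_card:
  assumes "finite A"
  shows "(\<Sum>(X, Y)\<in>Pow A \<times> Pow A. G (card X) (card Y)) =
    (\<Sum>a\<le>card A. \<Sum>r\<le>card A. of_nat (card A choose a) * of_nat (card A choose r) * G a r)"
proof -
  have "(\<Sum>(X, Y)\<in>Pow A \<times> Pow A. G (card X) (card Y)) = (\<Sum>X\<in>Pow A. \<Sum>Y\<in>Pow A. G (card X) (card Y))"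
    by (simp add: sum.cartesian_product)
  also have "\<dots> = (\<Sum>X\<in>Pow A. \<Sum>r\<le>card A. of_nat (card A choose r) * G (card X) r)"
    by (intro sum.cong refl sum_Pow_card[OF assms])
  also have "\<dots> = (\<Sum>a\<le>card A. of_nat (card A choose a) * (\<Sum>r\<le>card A. of_nat (card A choose r) * G a r))"
    by (rule sum_Pow_card[OF assms])
  finally show ?thesis
    by (simp add: sum_distrib_left mult.assoc)
qed

lemma sum_diagonal_pairs:
  fixes n p :: nat
  assumes "p \<le> n"
  shows "(\<Sum>a\<le>n. \<Sum>r\<le>n. if r + (n - a) = p then H a r else 0) = (\<Sum>k\<le>p. H (n - p + k) k)"
proof -
  have "(\<Sum>a\<le>n. \<Sum>r\<le>n. if r + (n - a) = p then H a r else 0) =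
      (\<Sum>ar\<in>{..n} \<times> {..n}. if snd ar + (n - fst ar) = p then H (fst ar) (snd ar) else 0)"
    by (simp only: sum.cartesian_product case_prod_unfold)
  also have "\<dots> = (\<Sum>ar\<in>{ar \<in> {..n} \<times> {..n}. snd ar + (n - fst ar) = p}. H (fst ar) (snd ar))"
    by (rule sum.inter_filter[symmetric]) simp
  also have "{ar \<in> {..n} \<times> {..n}. snd ar + (n - fst ar) = p} = (\<lambda>k. (n - p + k, k)) ` {..p}"
    using assms by (auto simp: image_iff)
  also have "(\<Sum>ar\<in>(\<lambda>k. (n - p + k, k)) ` {..p}. H (fst ar) (snd ar)) = (\<Sum>k\<le>p. H (n - p + k) k)"
    by (subst sum.reindex) (auto simp: inj_on_def)
  finally show ?thesis .
qed

lemma sum_subset_pairs_fact: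
  assumes "p \<le> e"
  shows "(\<Sum>(X, Y)\<in>Pow {..<e} \<times> Pow {..<e}.
      if card Y + (e - card X) = p then fact (2 * card X) * fact (2 * (e - card Y)) else 0) =
    (fact e ^ 2 * 4 ^ p * fact (2 * (e - p)) * fact (2 * (e - p) + p) / (fact (e - p) ^ 2 * fact p) :: real)"
proof -
  define c where "c = e - p"
  have "(\<Sum>(X, Y)\<in>Pow {..<e} \<times> Pow {..<e}.
        if card Y + (e - card X) = p then fact (2 * card X) * fact (2 * (e - card Y)) else (0::real)) =
      (\<Sum>a\<le>e. \<Sum>r\<le>e. of_nat (e choose a) * of_nat (e choose r) *
        (if r + (e - a) = p then fact (2 * a) * fact (2 * (e - r)) else 0))"
    using sum_Pow_Pow_card[of "{..<e}" "\<lambda>a r. if r + (e - a) = p then fact (2 * a) * fact (2 * (e - r)) else 0"]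
    by simp
  also have "\<dots> = (\<Sum>a\<le>e. \<Sum>r\<le>e.
      if r + (e - a) = p then of_nat (e choose a) * of_nat (e choose r) * (fact (2 * a) * fact (2 * (e - r))) else 0)"
    by (intro sum.cong refl) simp
  also have "\<dots> = (\<Sum>k\<le>p. of_nat (e choose (c + k)) * of_nat (e choose k) *
      (fact (2 * (c + k)) * fact (2 * (e - k))))"
    unfolding c_def by (rule sum_diagonal_pairs[OF assms])
  also have "\<dots> = (\<Sum>k\<le>p. fact e ^ 2 *
      (fact (2*(c+k)) / (fact (c+k) * fact k) * (fact (2*(c+p-k)) / (fact (c+p-k) * fact (p-k)))))"
  proof (rule sum.cong[OF refl])
    fix k assume "k \<in> {..p}"
    then have "e - (c + k) = p - k" "e - k = c + p - k" "c + k \<le> e" "k \<le> e"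
      using assms by (auto simp: c_def)
    then show "real (e choose (c + k)) * real (e choose k) * (fact (2 * (c + k)) * fact (2 * (e - k))) =
      fact e ^ 2 * (fact (2*(c+k)) / (fact (c+k) * fact k) * (fact (2*(c+p-k)) / (fact (c+p-k) * fact (p-k))))"
      by (simp add: binomial_fact power2_eq_square)
  qed
  also have "\<dots> = fact e ^ 2 * (4 ^ p * fact (2 * c) * fact (2 * c + p) / (fact c ^ 2 * fact p))"
    by (simp only: sum_distrib_left[symmetric] sum_central_factorial_convolution)
  finally show ?thesis
    by (simp add: c_def mult.assoc)
qed

definition bounded_matrices :: "nat \<Rightarrow> nat \<Rightarrow> (nat \<Rightarrow> nat \<Rightarrow> nat) set" where
  "bounded_matrices e p = {m. (\<forall>i j. e \<le> i \<or> e \<le> j \<longrightarrow> m i j = 0) \<and>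
     (\<Sum>i<e. \<Sum>j<e. m i j) = 2 * p \<and> (\<forall>i<e. rowsum e m i \<le> 2) \<and> (\<forall>j<e. colsum e m j \<le> 2)}"

lemma finite_bounded_matrices: "finite (bounded_matrices e p)"
proof -
  let ?rows = "\<Union>w\<le>2. compositions {..<e} w"
  have "bounded_matrices e p \<subseteq> {m. \<forall>i. (i \<in> {..<e} \<longrightarrow> m i \<in> ?rows) \<and> (i \<notin> {..<e} \<longrightarrow> m i = (\<lambda>_. 0))}"
    by (auto simp: bounded_matrices_def compositions_def rowsum_def not_less)
  then show ?thesis
    by (rule finite_subset) (intro finite_set_of_finite_funs finite_lessThan finite_UN_I finite_atMost finite_compositions)
qed

lemma NI_eq_sum_full_splits:
  "NI e p = (\<Sum>(X, Y)\<in>Pow {..<e} \<times> Pow {..<e}.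
     \<Sum>m\<in>{m \<in> bounded_matrices e p. full_split e m X Y}. fact (2*p) * 2 ^ (2*e - 2*p) / matrix_denom e m)"
proof -
  define w where "w m = fact (2*p) * 2 ^ (2*e - 2*p) / matrix_denom e m" for m
  have "NI e p = (\<Sum>m\<in>admissible e p. w m * 2 ^ ncycles e m)"
    unfolding NI_def w_def matrix_denom_def by (simp add: power_add mult.assoc)
  also have "\<dots> = (\<Sum>m\<in>bounded_matrices e p.
      if \<forall>K\<in>gcomps e m. \<not> is_LR_chain e m K then w m * 2 ^ ncycles e m else 0)"
  proof -
    have "admissible e p = {m \<in> bounded_matrices e p. \<forall>K\<in>gcomps e m. \<not> is_LR_chain e m K}"
      by (auto simp: admissible_def bounded_matrices_def)
    then show ?thesis by (simp add: sum.inter_filter finite_bounded_matrices)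
  qed
  also have "\<dots> = (\<Sum>m\<in>bounded_matrices e p. w m * card {(X, Y). full_split e m X Y})"
    by (intro sum.cong refl) (auto simp: card_full_splits bounded_matrices_def)
  also have "\<dots> = (\<Sum>m\<in>bounded_matrices e p.
      \<Sum>XY\<in>{XY \<in> Pow {..<e} \<times> Pow {..<e}. case_prod (full_split e m) XY}. w m)"
  proof (intro sum.cong refl)
    fix m
    have "{(X, Y). full_split e m X Y} = {XY \<in> Pow {..<e} \<times> Pow {..<e}. case_prod (full_split e m) XY}"
      by (auto simp: full_split_def)
    then show "w m * card {(X, Y). full_split e m X Y} =
        (\<Sum>XY\<in>{XY \<in> Pow {..<e} \<times> Pow {..<e}. case_prod (full_split e m) XY}. w m)"
      by simp
  qed
  also have "\<dots> = (\<Sum>XY\<in>Pow {..<e} \<times> Pow {..<e}.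
      \<Sum>m\<in>{m \<in> bounded_matrices e p. case_prod (full_split e m) XY}. w m)"
    by (rule sum.swap_restrict) (simp_all add: finite_bounded_matrices)
  finally show ?thesis
    by (simp add: w_def case_prod_unfold)
qed

lemma sum_full_split_bounded_matrices:
  assumes X: "X \<subseteq> {..<e}" and Y: "Y \<subseteq> {..<e}" and "p \<le> e"
  shows "(\<Sum>m\<in>{m \<in> bounded_matrices e p. full_split e m X Y}. 1 / matrix_denom e m) =
    (if card Y + (e - card X) = p
     then fact (2 * card X) * fact (2 * (e - card Y)) / (fact (2*e - 2*p) ^ 2 * 4 ^ e) else 0)"
proof (cases "card Y + (e - card X) = p")
  case True
  have fin: "finite X" "finite Y" using X Y finite_subset by auto
  have cards: "card X \<le> e" "card Y \<le> card X"
    "card ({..<e} - X) = e - card X" "card ({..<e} - Y) = e - card Y"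
    using True assms fin card_mono[OF _ X] by (auto simp: card_Diff_subset)
  have "{m \<in> bounded_matrices e p. full_split e m X Y} = split_matrices e X Y"
    using total_split_matrix[OF X Y] True by (auto simp: bounded_matrices_def split_matrices_def)
  then have "(\<Sum>m\<in>{m \<in> bounded_matrices e p. full_split e m X Y}. 1 / matrix_denom e m) =
      (\<Sum>g\<in>tables Y X (\<lambda>_. 2) (\<lambda>_. 2). table_weight Y X (\<lambda>_. 2) g) *
      (\<Sum>g\<in>tables ({..<e} - X) ({..<e} - Y) (\<lambda>_. 2) (\<lambda>_. 2).
        table_weight ({..<e} - X) ({..<e} - Y) (\<lambda>_. 2) g)"
    by (simp add: sum_split_matrices_inverse_denom[OF X Y])
  also have "\<dots> = fact (2 * card X) / (fact (2 * card X - 2 * card Y) * 2 ^ card X * 2 ^ card Y) *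
      (fact (2 * (e - card Y)) /
        (fact (2 * (e - card Y) - 2 * (e - card X)) * 2 ^ (e - card Y) * 2 ^ (e - card X)))"
    using fin cards by (simp add: sum_table_weight_twos)
  also have "\<dots> = fact (2 * card X) * fact (2 * (e - card Y)) / (fact (2*e - 2*p) ^ 2 * 4 ^ e)"
  proof -
    have "2 * card X - 2 * card Y = 2*e - 2*p" "2 * (e - card Y) - 2 * (e - card X) = 2*e - 2*p"
      using True cards by auto
    moreover have "(2::real) ^ card X * 2 ^ card Y * (2 ^ (e - card Y) * 2 ^ (e - card X)) = 4 ^ e"
    proof -
      have "(2::real) ^ card X * 2 ^ card Y * (2 ^ (e - card Y) * 2 ^ (e - card X)) = 2 ^ (2 * e)"
        using cards by (simp flip: power_add)
      then show ?thesis by (simp add: power_mult)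
    qed
    ultimately show ?thesis
      by (simp add: power2_eq_square field_simps)
  qed
  finally show ?thesis using True by simp
next
  case False
  then have "{m \<in> bounded_matrices e p. full_split e m X Y} = {}"
    using total_split_matrix[OF X Y] by (auto simp: bounded_matrices_def split_matrices_def)
  then show ?thesis using False by (simp only: sum.empty if_False)
qed

lemma NI_closed_form:
  assumes "p \<le> e"
  shows "NI e p = fact (2*p) * fact e ^ 2 * fact (2*e - p) / (fact p * fact (e - p) ^ 2 * fact (2*e - 2*p))"
proof -
  define c where "c = e - p"
  have e: "e = c + p" "2*e - 2*p = 2*c" "2*e - p = 2*c + p" using assms by (auto simp: c_def)
  have "NI e p = (\<Sum>(X, Y)\<in>Pow {..<e} \<times> Pow {..<e}. fact (2*p) * 2 ^ (2*e - 2*p) *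
      (\<Sum>m\<in>{m \<in> bounded_matrices e p. full_split e m X Y}. 1 / matrix_denom e m))"
    by (simp add: NI_eq_sum_full_splits sum_distrib_left case_prod_unfold)
  also have "\<dots> = (\<Sum>(X, Y)\<in>Pow {..<e} \<times> Pow {..<e}. fact (2*p) * 2 ^ (2*e - 2*p) *
      (if card Y + (e - card X) = p
       then fact (2 * card X) * fact (2 * (e - card Y)) / (fact (2*e - 2*p) ^ 2 * 4 ^ e) else 0))"
    by (intro sum.cong refl) (clarsimp simp: sum_full_split_bounded_matrices assms)
  also have "\<dots> = fact (2*p) * 2 ^ (2*e - 2*p) / (fact (2*e - 2*p) ^ 2 * 4 ^ e) *
      (\<Sum>(X, Y)\<in>Pow {..<e} \<times> Pow {..<e}.
        if card Y + (e - card X) = p then fact (2 * card X) * fact (2 * (e - card Y)) else 0)"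
    unfolding sum_distrib_left by (intro sum.cong refl) (auto simp: case_prod_unfold)
  also have "\<dots> = fact (2*p) * 2 ^ (2*e - 2*p) / (fact (2*e - 2*p) ^ 2 * 4 ^ e) *
      (fact e ^ 2 * 4 ^ p * fact (2 * (e - p)) * fact (2 * (e - p) + p) / (fact (e - p) ^ 2 * fact p))"
    by (simp add: sum_subset_pairs_fact assms)
  also have "\<dots> = fact (2*p) * fact e ^ 2 * fact (2*e - p) / (fact p * fact (e - p) ^ 2 * fact (2*e - 2*p))"
  proof -
    have "(2::real) ^ (2*c) = 4 ^ c" by (simp add: power_mult)
    then show ?thesis
      unfolding e c_def[symmetric] by (simp add: power_add power2_eq_square field_simps)
  qed
  finally show ?thesis .
qed

theorem mainTheorem11:
  fixes e p :: nat
  assumes "1 \<le> e" and "p \<le> e"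
  shows "NI e p = (fact (2*e))^2 / (fact (2*e - 2*p))^2 * NII e e p"
proof -
  (* The closed form also holds for e = 0. *)
  have "e + e - p = 2*e - p" "e + e - 2*p = 2*e - 2*p" "2*e - 2*p = 2*(e - p)"
    by auto
  then show ?thesis
    unfolding NI_closed_form[OF assms(2)] NII_def by (simp add: power2_eq_square field_simps)
qed

end
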